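(* Let $n$ be a positive integer. If two welded string links are $(2n+\mathrm{sv})$-equivalent, then they are $(V^{n}+\mathrm{sv})$-equivalent.
   Context: Welded string links: equivalence classes of ordered oriented string link diagrams whose double points are classical or virtual crossings, under welded Reidemeister moves R1–R3, V1–V4 and OC (welded isotopy). A $2n$-move replaces two parallel strands in a disk by two strands twisted with $2n$ consecutive classical crossings ($2n$ half-twists), or the inverse. A $V^n$-move: on two oriented strands in a disk, replace two parallel crossingless strands by a configuration where one strand passes under the other $n$ times consecutively at classical crossings of the same sign, crossing back via a virtual crossing after each (and the inverse). Self-crossing virtualization: replace a classical crossing between strands of the same component by a virtual one, or conversely. $(2n+\mathrm{sv})$-equivalence (resp. $(V^n+\mathrm{sv})$-equivalence) is generated by $2n$-moves (resp. $V^n$-moves), self-crossing virtualizations and welded isotopy. *)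

theory Defs
  imports Main "HOL-Library.Multiset"
begin

text \<open>Welded string links are modelled by Gauss diagrams: an ordered list of strands
(one word per component, read along the orientation), each word listing the endpoints of
the arrows (classical crossings) met along that strand.  An arrow goes from the
over-strand (tail) to the under-strand (head) and carries the sign of its crossing.
Virtual crossings are invisible in Gauss diagrams, which accounts for the moves V1-V4.\<close>

datatype ep = Ep (aname: nat) (is_tail: bool) (pos: bool)

type_synonym gdiag = "ep list list"

definition pm :: "bool \<Rightarrow> int" where
  "pm b = (if b then 1 else -1)"

definition names :: "gdiag \<Rightarrow> nat set" where
  "names D = aname ` set (concat D)"

definition wf_gd :: "gdiag \<Rightarrow> bool" where
  "wf_gd D \<longleftrightarrow> (\<forall>x \<in> names D. \<exists>s.
     filter (\<lambda>e. aname e = x) (concat D) \<in> {[Ep x True s, Ep x False s], [Ep x False s, Ep x True s]})"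

text \<open>Contexts: diagrams with holes (None); holes are filled in reading order with
segments.  A local move replaces the contents of some disjoint segments (arcs of
strands in a disk).\<close>
definition holes :: "ep option list \<Rightarrow> nat" where
  "holes w = length (filter (\<lambda>h. h = None) w)"

fun fillw :: "ep option list \<Rightarrow> ep list list \<Rightarrow> ep list" where
  "fillw [] ss = []"
| "fillw (Some e # w) ss = e # fillw w ss"
| "fillw (None # w) ss = hd ss @ fillw w (tl ss)"

fun fill :: "ep option list list \<Rightarrow> ep list list \<Rightarrow> gdiag" where
  "fill [] ss = []"
| "fill (w # ws) ss = fillw w ss # fill ws (drop (holes w) ss)"

definition local_move :: "(ep list list \<Rightarrow> ep list list \<Rightarrow> bool) \<Rightarrow> gdiag \<Rightarrow> gdiag \<Rightarrow> bool" where
  "local_move M D D' \<longleftrightarrow> wf_gd D \<and> wf_gd D' \<and>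
     (\<exists>C ss ss' ts ts'. M ss ss' \<and> length ss = length ss' \<and>
        length ts = length ss \<and> length ts' = length ss \<and>
        mset (zip ts ts') = mset (zip ss ss') \<and>
        sum_list (map holes C) = length ts \<and> D = fill C ts \<and> D' = fill C ts')"

definition R1 :: "ep list list \<Rightarrow> ep list list \<Rightarrow> bool" where
  "R1 ss ss' \<longleftrightarrow> (\<exists>x t s. ss = [[]] \<and> ss' = [[Ep x t s, Ep x (\<not> t) s]])"

definition R2 :: "ep list list \<Rightarrow> ep list list \<Rightarrow> bool" where
  "R2 ss ss' \<longleftrightarrow> (\<exists>x y s. ss = [[], []] \<and>
     (ss' = [[Ep x True s, Ep y True (\<not> s)], [Ep x False s, Ep y False (\<not> s)]] \<or>
      ss' = [[Ep x True s, Ep y True (\<not> s)], [Ep y False (\<not> s), Ep x False s]]))"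

text \<open>R3: three strands, 1 on top, 2 in the middle, 3 at the bottom; arrows x: 1->2,
y: 2->3, z: 1->3.  The parameters e1 e2 e3 encode the orientation of each strand
relative to the triangle and d the orientation of the triangle; the signs are
those realised by an actual triangle of three oriented straight strands.\<close>
definition R3 :: "ep list list \<Rightarrow> ep list list \<Rightarrow> bool" where
  "R3 ss ss' \<longleftrightarrow> (\<exists>x y z sx sy sz d e1 e2 e3.
     pm sx = pm d * pm e1 * pm e2 \<and> pm sy = pm d * pm e2 * pm e3 \<and>
     pm sz = - (pm d * pm e1 * pm e3) \<and>
     ss = [ (if e1 then [Ep z True sz, Ep x True sx] else [Ep x True sx, Ep z True sz]),
            (if e2 then [Ep x False sx, Ep y True sy] else [Ep y True sy, Ep x False sx]),
            (if e3 then [Ep y False sy, Ep z False sz] else [Ep z False sz, Ep y False sy]) ] \<and>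
     ss' = map rev ss)"

definition OC :: "ep list list \<Rightarrow> ep list list \<Rightarrow> bool" where
  "OC ss ss' \<longleftrightarrow> (\<exists>x y s t. ss = [[Ep x True s, Ep y True t]] \<and> ss' = [[Ep y True t, Ep x True s]])"

definition rename_step :: "gdiag \<Rightarrow> gdiag \<Rightarrow> bool" where
  "rename_step D D' \<longleftrightarrow> wf_gd D \<and> (\<exists>f. inj_on f (names D) \<and>
     D' = map (map (\<lambda>e. Ep (f (aname e)) (is_tail e) (pos e))) D)"

definition isotopy_step :: "gdiag \<Rightarrow> gdiag \<Rightarrow> bool" where
  "isotopy_step D D' \<longleftrightarrow> rename_step D D' \<or> local_move R1 D D' \<or> local_move R2 D D' \<or>
     local_move R3 D D' \<or> local_move OC D D'"

definition welded_isotopic :: "gdiag \<Rightarrow> gdiag \<Rightarrow> bool" where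
  "welded_isotopic = equivclp isotopy_step"

text \<open>Self-crossing virtualization: delete an arrow with both endpoints on one strand.\<close>
definition sv_step :: "gdiag \<Rightarrow> gdiag \<Rightarrow> bool" where
  "sv_step D D' \<longleftrightarrow> wf_gd D \<and> wf_gd D' \<and> (\<exists>i x. i < length D \<and>
     length (filter (\<lambda>e. aname e = x) (D ! i)) = 2 \<and>
     D' = D[i := filter (\<lambda>e. aname e \<noteq> x) (D ! i)])"

text \<open>2n-move: 2n consecutive classical crossings of the same sign between two strands,
alternately over and under (2n half-twists); the two strands are parallel or antiparallel.\<close>
definition twist_move :: "nat \<Rightarrow> ep list list \<Rightarrow> ep list list \<Rightarrow> bool" where
  "twist_move n ss ss' \<longleftrightarrow> (\<exists>xs c s rv. length xs = 2 * n \<and> ss = [[], []] \<and>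
     ss' = [ map (\<lambda>i. Ep (xs ! i) (c = even i) s) [0..<2 * n],
             (if rv then rev else id) (map (\<lambda>i. Ep (xs ! i) (c \<noteq> even i) s) [0..<2 * n]) ])"

text \<open>V^n-move: one strand passes n times under the other at classical crossings of the
same sign (the returns are virtual).  The order of the tails on the over-strand is left
arbitrary (it is immaterial modulo OC).\<close>
definition V_move :: "nat \<Rightarrow> ep list list \<Rightarrow> ep list list \<Rightarrow> bool" where
  "V_move n ss ss' \<longleftrightarrow> (\<exists>xs s Sb. length xs = n \<and> ss = [[], []] \<and>
     mset Sb = mset (map (\<lambda>x. Ep x True s) xs) \<and>
     ss' = [map (\<lambda>x. Ep x False s) xs, Sb])"

definition twon_sv_equiv :: "nat \<Rightarrow> gdiag \<Rightarrow> gdiag \<Rightarrow> bool" where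
  "twon_sv_equiv n = equivclp (\<lambda>D D'. isotopy_step D D' \<or> local_move (twist_move n) D D' \<or> sv_step D D')"

definition Vn_sv_equiv :: "nat \<Rightarrow> gdiag \<Rightarrow> gdiag \<Rightarrow> bool" where
  "Vn_sv_equiv n = equivclp (\<lambda>D D'. isotopy_step D D' \<or> local_move (V_move n) D D' \<or> sv_step D D')"

end

theory Submission
  imports Defs
begin

text \<open>A 2n-move inserts, on two arcs, 2n arrows of one sign whose directions alternate. If both
  arcs lie on the same strand, all these arrows are self-crossings and self-crossing
  virtualizations delete them. Otherwise, a tail and an adjacent head on one arc whose other ends
  both lie on the other strand can be exchanged: a self-crossing virtualization adds an auxiliary
  arrow on the other strand that closes an R3 triangle with the two arrows, the R3 move slides the
  ends past each other, and the auxiliary arrow is deleted again. Sorting tails before heads on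
  both arcs turns the twist into two clasps of n arrows each, one in each direction, and each
  clasp is a V^n-move.\<close>

definition other_end :: "ep \<Rightarrow> ep" where
  "other_end e = Ep (aname e) (\<not> is_tail e) (pos e)"

lemma other_end_Ep [simp]: "other_end (Ep x t s) = Ep x (\<not> t) s"
  by (simp add: other_end_def)

lemma ep_sel_other_end [simp]:
  "aname (other_end e) = aname e" "is_tail (other_end e) = (\<not> is_tail e)"
  "pos (other_end e) = pos e"
  by (simp_all add: other_end_def)

lemma other_end_other_end [simp]: "other_end (other_end e) = e"
  by (simp add: other_end_def)

lemma ends_other_end: "{e, other_end e} = {Ep (aname e) True (pos e), Ep (aname e) False (pos e)}"
  by (cases e) auto

definition wf_ends :: "ep multiset \<Rightarrow> bool" where
  "wf_ends M \<longleftrightarrow> (\<forall>x \<in> aname ` set_mset M. \<exists>s.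
     filter_mset (\<lambda>e. aname e = x) M = {#Ep x True s, Ep x False s#})"

lemma mset_eq_doubleton_iff: "mset l = {#a, b#} \<longleftrightarrow> l = [a, b] \<or> l = [b, a]"
proof
  assume h: "mset l = {#a, b#}"
  then have "length l = 2" by (metis size_mset size_add_mset size_empty One_nat_def numeral_2_eq_2)
  then obtain u v where "l = [u, v]"
    by (metis (no_types, opaque_lifting) Suc_length_conv length_0_conv numeral_2_eq_2)
  with h show "l = [a, b] \<or> l = [b, a]"
    by (auto simp: add_eq_conv_ex)
qed auto

lemma wf_gd_iff_wf_ends: "wf_gd D \<longleftrightarrow> wf_ends (mset (concat D))"
  unfolding wf_gd_def wf_ends_def names_def
  by (simp add: mset_filter[symmetric] mset_eq_doubleton_iff del: mset_filter)

lemma wf_gd_mset_cong: "mset (concat D') = mset (concat D) \<Longrightarrow> wf_gd D \<Longrightarrow> wf_gd D'"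
  by (simp add: wf_gd_iff_wf_ends)

lemma mset_concat_update:
  "i < length D \<Longrightarrow> mset (concat (D[i := w])) + mset (D ! i) = mset (concat D) + mset w"
proof (induction D arbitrary: i)
  case (Cons d D)
  then show ?case by (cases i) (auto simp: ac_simps)
qed simp

lemma mset_concat_update_perm:
  "i < length D \<Longrightarrow> mset w = mset (D ! i) \<Longrightarrow> mset (concat (D[i := w])) = mset (concat D)"
  using mset_concat_update[of i D w] by simp

lemma wf_ends_both_ends_in_part:
  assumes wf: "wf_ends (A + B)" and ends: "Ep x True s \<in># B" "Ep x False s \<in># B" and "e \<in># A"
  shows "aname e \<noteq> x"
proof
  assume ex: "aname e = x"
  let ?F = "filter_mset (\<lambda>e. aname e = x)"
  have "x \<in> aname ` set_mset (A + B)" using ends by force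
  with wf obtain s' where "?F (A + B) = {#Ep x True s', Ep x False s'#}"
    unfolding wf_ends_def by blast
  then have "size (?F A) + size (?F B) = 2"
    by (metis size_union filter_union_mset size_add_mset size_empty One_nat_def numeral_2_eq_2)
  moreover have "{#Ep x True s, Ep x False s#} \<subseteq># ?F B"
    using ends by (auto simp: insert_subset_eq_iff in_diff_count)
  then have "2 \<le> size (?F B)" using size_mset_mono by fastforce
  moreover have "?F A \<noteq> {#}" using \<open>e \<in># A\<close> ex by (auto simp: filter_mset_eq_mempty_iff)
  then have "size (?F A) \<noteq> 0" by (simp del: filter_mset_eq_mempty_iff)
  ultimately show False by linarith
qed

lemma wf_ends_remove_closed:
  assumes wf: "wf_ends (A + B)" and closed: "\<forall>e \<in># B. other_end e \<in># B"
  shows "wf_ends A"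
  unfolding wf_ends_def
proof
  fix x assume "x \<in> aname ` set_mset A"
  then obtain a where a: "a \<in># A" "aname a = x" by blast
  have "filter_mset (\<lambda>e. aname e = x) B = {#}"
  proof (rule ccontr)
    assume "filter_mset (\<lambda>e. aname e = x) B \<noteq> {#}"
    then obtain e where e: "e \<in># B" "aname e = x" by (auto simp: filter_mset_eq_mempty_iff)
    then have "{e, other_end e} \<subseteq> set_mset B" using closed by blast
    then have "Ep x True (pos e) \<in># B" "Ep x False (pos e) \<in># B"
      unfolding ends_other_end e(2) by auto
    then show False using wf_ends_both_ends_in_part[OF wf _ _ a(1)] a(2) by blast
  qed
  moreover have "x \<in> aname ` set_mset (A + B)" using a by force
  with wf obtain s where "filter_mset (\<lambda>e. aname e = x) (A + B) = {#Ep x True s, Ep x False s#}"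
    unfolding wf_ends_def by blast
  ultimately show "\<exists>s. filter_mset (\<lambda>e. aname e = x) A = {#Ep x True s, Ep x False s#}"
    by (metis filter_union_mset add_0_right)
qed

lemma wf_ends_add_arrow:
  assumes "wf_ends A" "z \<notin> aname ` set_mset A"
  shows "wf_ends (A + {#Ep z True s, Ep z False s#})"
  unfolding wf_ends_def
proof
  fix x assume x: "x \<in> aname ` set_mset (A + {#Ep z True s, Ep z False s#})"
  show "\<exists>s'. filter_mset (\<lambda>e. aname e = x) (A + {#Ep z True s, Ep z False s#})
      = {#Ep x True s', Ep x False s'#}"
  proof (cases "x = z")
    case True
    then have "filter_mset (\<lambda>e. aname e = x) A = {#}" using assms(2) by auto
    then show ?thesis using True by (auto simp del: filter_mset_eq_mempty_iff)
  next
    case False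
    then have "x \<in> aname ` set_mset A" using x by auto
    then obtain s' where "filter_mset (\<lambda>e. aname e = x) A = {#Ep x True s', Ep x False s'#}"
      using assms(1) unfolding wf_ends_def by blast
    then show ?thesis using False by auto
  qed
qed

lemma wf_gd_insert_fresh_arrow:
  assumes "wf_gd D" "z \<notin> names D" "j < length D"
    and "mset w = mset (D ! j) + {#Ep z True s, Ep z False s#}"
  shows "wf_gd (D[j := w])"
proof -
  have "mset (concat (D[j := w])) = mset (concat D) + {#Ep z True s, Ep z False s#}"
    using mset_concat_update[OF assms(3), of w] assms(4) by (simp add: ac_simps)
  moreover have "z \<notin> aname ` set_mset (mset (concat D))" using assms(2) by (simp add: names_def)
  ultimately show ?thesis
    using wf_ends_add_arrow assms(1) unfolding wf_gd_iff_wf_ends by metis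
qed

lemma fresh_name: obtains z where "z \<notin> names D"
  using ex_new_if_finite[OF infinite_UNIV_nat] by (metis finite_imageI finite_set names_def)

lemma holes_simps [simp]:
  "holes [] = 0" "holes (None # w) = Suc (holes w)" "holes (Some e # w) = holes w"
  "holes (w1 @ w2) = holes w1 + holes w2" "holes (map Some a) = 0"
  by (auto simp: holes_def)

lemma sum_holes_map_Some [simp]: "sum_list (map (holes \<circ> map Some) P) = 0"
  by (induction P) auto

lemma fillw_map_Some [simp]: "fillw (map Some a) ss = a"
  by (induction a) auto

lemma fillw_append [simp]: "fillw (w1 @ w2) ss = fillw w1 ss @ fillw w2 (drop (holes w1) ss)"
  by (induction w1 ss rule: fillw.induct) (auto simp: drop_Suc)

lemma fill_append [simp]:
  "fill (C1 @ C2) ss = fill C1 ss @ fill C2 (drop (sum_list (map holes C1)) ss)"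
  by (induction C1 arbitrary: ss) (auto simp: add.commute)

lemma fill_map_Some [simp]: "fill (map (map Some) D) ss = D"
  by (induction D arbitrary: ss) auto

lemma fill_update:
  "i < length D \<Longrightarrow> fill ((map (map Some) D)[i := w]) ts = D[i := fillw w ts]"
proof (induction D arbitrary: i)
  case (Cons d D)
  then show ?case by (cases i) auto
qed simp

lemma sum_holes_update:
  "i < length D \<Longrightarrow> sum_list (map holes ((map (map Some) D)[i := w])) = holes w"
proof (induction D arbitrary: i)
  case (Cons d D)
  then show ?case by (cases i) auto
qed simp

lemma fill_update_two:
  "i < length D \<Longrightarrow> j < length D \<Longrightarrow> i \<noteq> j \<Longrightarrow>
   fill ((map (map Some) D)[i := v, j := w]) ts =
   D[i := fillw v (if i < j then ts else drop (holes w) ts),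
     j := fillw w (if i < j then drop (holes v) ts else ts)]"
proof (induction D arbitrary: i j ts)
  case (Cons d D)
  show ?case
  proof (cases i)
    case 0
    then obtain j' where "j = Suc j'" using Cons by (cases j) auto
    then show ?thesis using 0 Cons by (auto simp: fill_update)
  next
    case (Suc i')
    show ?thesis
    proof (cases j)
      case 0
      then show ?thesis using Suc Cons by (auto simp: fill_update list_update_swap)
    next
      case (Suc j')
      then show ?thesis using \<open>i = Suc i'\<close> Cons by auto
    qed
  qed
qed simp

lemma sum_holes_update_two:
  "i < length D \<Longrightarrow> j < length D \<Longrightarrow> i \<noteq> j \<Longrightarrow>
   sum_list (map holes ((map (map Some) D)[i := v, j := w])) = holes v + holes w"
proof (induction D arbitrary: i j)
  case (Cons d D)
  show ?case
  proof (cases i)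
    case 0
    then obtain j' where "j = Suc j'" using Cons by (cases j) auto
    then show ?thesis using 0 Cons sum_holes_update by auto
  next
    case (Suc i')
    then show ?thesis using Cons sum_holes_update by (cases j) auto
  qed
qed simp

lemma holes_eq_0_iff: "holes w = 0 \<longleftrightarrow> (\<exists>a. w = map Some a)"
proof (induction w)
  case (Cons h w)
  then show ?case by (cases h) (auto simp: Cons_eq_map_conv)
qed simp

lemma holes_eq_Suc_imp: "holes w = Suc k \<Longrightarrow> \<exists>a w'. w = map Some a @ None # w' \<and> holes w' = k"
proof (induction w)
  case (Cons h w)
  show ?case
  proof (cases h)
    case None
    then show ?thesis using Cons.prems by (intro exI[of _ "[]"] exI[of _ w]) auto
  next
    case (Some e)
    then obtain a w' where "w = map Some a @ None # w'" "holes w' = k" using Cons by auto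
    then show ?thesis using Some by (intro exI[of _ "e # a"]) auto
  qed
qed simp

lemma holes_eq_1_imp: "holes w = 1 \<Longrightarrow> \<exists>a b. w = map Some a @ None # map Some b"
  using holes_eq_Suc_imp[of w 0] holes_eq_0_iff by fastforce

lemma holes_eq_2_imp:
  "holes w = 2 \<Longrightarrow> \<exists>a b c. w = map Some a @ None # map Some b @ None # map Some c"
  using holes_eq_Suc_imp[of w 1] holes_eq_1_imp by fastforce

lemma sum_holes_eq_0_iff: "sum_list (map holes C) = 0 \<longleftrightarrow> (\<exists>D. C = map (map Some) D)"
proof (induction C)
  case (Cons w C)
  then show ?case by (auto simp: holes_eq_0_iff Cons_eq_map_conv)
qed simp

lemma context_first_hole:
  "sum_list (map holes C) = Suc k \<Longrightarrow>
   \<exists>P w R. C = map (map Some) P @ w # R \<and> 0 < holes w \<and> holes w + sum_list (map holes R) = Suc k"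
proof (induction C)
  case (Cons w C)
  show ?case
  proof (cases "holes w = 0")
    case True
    then obtain P w' R where "C = map (map Some) P @ w' # R" "0 < holes w'"
      "holes w' + sum_list (map holes R) = Suc k"
      using Cons by auto
    moreover obtain a where "w = map Some a" using True holes_eq_0_iff by blast
    ultimately show ?thesis by (intro exI[of _ "a # P"]) auto
  next
    case False
    then show ?thesis using Cons.prems by (intro exI[of _ "[]"] exI[of _ w] exI[of _ C]) auto
  qed
qed simp

lemma fill_same_strand:
  "fill (map (map Some) P @ (map Some a @ None # map Some b @ None # map Some c) # map (map Some) R)
     [t1, t2] = P @ [a @ t1 @ b @ t2 @ c] @ R"
  by simp

lemma fill_two_strands:
  "fill (map (map Some) P @ (map Some a1 @ None # map Some a2) # map (map Some) M @
      (map Some b1 @ None # map Some b2) # map (map Some) R) [t1, t2]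
   = P @ [a1 @ t1 @ a2] @ M @ [b1 @ t2 @ b2] @ R"
  by simp

lemma context_two_holes_cases:
  assumes "sum_list (map holes C) = 2"
  obtains (same_strand) P a b c R where
    "\<And>t1 t2. fill C [t1, t2] = P @ [a @ t1 @ b @ t2 @ c] @ R"
  | (two_strands) P a1 a2 M b1 b2 R where
    "\<And>t1 t2. fill C [t1, t2] = P @ [a1 @ t1 @ a2] @ M @ [b1 @ t2 @ b2] @ R"
proof -
  obtain P w R where C: "C = map (map Some) P @ w # R" and "0 < holes w"
    and "holes w + sum_list (map holes R) = 2"
    using context_first_hole[of C 1] assms by auto
  then consider "holes w = 2" "sum_list (map holes R) = 0"
    | "holes w = 1" "sum_list (map holes R) = 1"
    by linarith
  then show thesis
  proof cases
    case 1
    then obtain a b c R' where "w = map Some a @ None # map Some b @ None # map Some c"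
      and "R = map (map Some) R'"
      using holes_eq_2_imp sum_holes_eq_0_iff by meson
    then show thesis using same_strand fill_same_strand unfolding C by metis
  next
    case 2
    then obtain M w' R' where R: "R = map (map Some) M @ w' # R'" and "0 < holes w'"
      and "holes w' + sum_list (map holes R') = 1"
      using context_first_hole[of R 0] by auto
    then have "holes w' = 1" "sum_list (map holes R') = 0" by linarith+
    then obtain a1 a2 b1 b2 R2 where "w = map Some a1 @ None # map Some a2"
      and "w' = map Some b1 @ None # map Some b2" and "R' = map (map Some) R2"
      using holes_eq_1_imp sum_holes_eq_0_iff \<open>holes w = 1\<close> by meson
    then show thesis using two_strands fill_two_strands unfolding C R by metis
  qed
qed

lemma equivclp_le_equivclp:
  assumes "\<And>x y. r x y \<Longrightarrow> equivclp s x y" and "equivclp r x y"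
  shows "equivclp s x y"
  using assms(2)
proof (induction rule: equivclp_induct)
  case (step y z)
  then show ?case by (meson assms(1) equivclp_sym equivclp_trans)
qed simp

lemma Vn_sv_equiv_refl: "Vn_sv_equiv n D D"
  by (simp add: Vn_sv_equiv_def)

lemma Vn_sv_equiv_sym: "Vn_sv_equiv n D D' \<Longrightarrow> Vn_sv_equiv n D' D"
  unfolding Vn_sv_equiv_def by (rule equivclp_sym)

lemma Vn_sv_equiv_trans [trans]:
  "Vn_sv_equiv n D D' \<Longrightarrow> Vn_sv_equiv n D' D'' \<Longrightarrow> Vn_sv_equiv n D D''"
  unfolding Vn_sv_equiv_def by (rule equivclp_trans)

lemma Vn_sv_equiv_isotopy: "isotopy_step D D' \<Longrightarrow> Vn_sv_equiv n D D'"
  unfolding Vn_sv_equiv_def by (rule r_into_equivclp) simp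

lemma Vn_sv_equiv_R3: "local_move R3 D D' \<Longrightarrow> Vn_sv_equiv n D D'"
  by (simp add: Vn_sv_equiv_isotopy isotopy_step_def)

lemma Vn_sv_equiv_V_move: "local_move (V_move n) D D' \<Longrightarrow> Vn_sv_equiv n D D'"
  unfolding Vn_sv_equiv_def by (rule r_into_equivclp) simp

lemma Vn_sv_equiv_sv: "sv_step D D' \<Longrightarrow> Vn_sv_equiv n D D'"
  unfolding Vn_sv_equiv_def by (rule r_into_equivclp) simp

lemma local_moveI:
  assumes "M ss ss'" "length ss' = length ss" "length ts = length ss" "length ts' = length ss"
    "mset (zip ts ts') = mset (zip ss ss')" "sum_list (map holes C) = length ts"
    "wf_gd (fill C ts)" "wf_gd (fill C ts')"
  shows "local_move M (fill C ts) (fill C ts')"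
  using assms unfolding local_move_def by metis

lemma local_move_insert_two_strands:
  assumes "M [[], []] [X, Y] \<or> M [[], []] [Y, X]"
    and "wf_gd (P @ [a1 @ a2] @ Q @ [b1 @ b2] @ R)"
    and "wf_gd (P @ [a1 @ X @ a2] @ Q @ [b1 @ Y @ b2] @ R)"
  shows "local_move M (P @ [a1 @ a2] @ Q @ [b1 @ b2] @ R)
    (P @ [a1 @ X @ a2] @ Q @ [b1 @ Y @ b2] @ R)"
proof -
  define C where "C = map (map Some) P @ (map Some a1 @ None # map Some a2) # map (map Some) Q
    @ (map Some b1 @ None # map Some b2) # map (map Some) R"
  obtain ss' where "M [[], []] ss'" and "ss' = [X, Y] \<or> ss' = [Y, X]" using assms(1) by blast
  then have "local_move M (fill C [[], []]) (fill C [X, Y])"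
    by (intro local_moveI[of M "[[], []]" ss'])
      (use assms(2,3) in \<open>auto simp: C_def add_mset_commute\<close>)
  then show ?thesis by (simp only: C_def fill_two_strands append_Nil)
qed

lemma local_move_two_strands:
  assumes "M ss ss'" "length ss = 3" "length ss' = 3"
    and "mset (zip ss ss') = {#(u, u'), (v1, v1'), (v2, v2')#}"
    and "i < length D" "j < length D" "i \<noteq> j"
    and "D ! i = p @ u @ q" "D ! j = r @ v1 @ s @ v2 @ t"
    and "wf_gd D" "wf_gd (D[i := p @ u' @ q, j := r @ v1' @ s @ v2' @ t])"
  shows "local_move M D (D[i := p @ u' @ q, j := r @ v1' @ s @ v2' @ t])"
proof -
  define C where "C = (map (map Some) D)[i := map Some p @ None # map Some q,
    j := map Some r @ None # map Some s @ None # map Some t]"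
  define ts where "ts = (if i < j then [u, v1, v2] else [v1, v2, u])"
  define ts' where "ts' = (if i < j then [u', v1', v2'] else [v1', v2', u'])"
  have "fill C ts = D[i := p @ u @ q, j := r @ v1 @ s @ v2 @ t]"
    using assms(5-7) by (simp add: C_def fill_update_two ts_def)
  also have "\<dots> = D" using assms(8,9) by (metis list_update_id)
  finally have D: "fill C ts = D" .
  have D': "fill C ts' = D[i := p @ u' @ q, j := r @ v1' @ s @ v2' @ t]"
    using assms(5-7) by (simp add: C_def fill_update_two ts'_def)
  have "local_move M (fill C ts) (fill C ts')"
    by (rule local_moveI[of M ss ss', OF assms(1)])
      (use assms D D' in \<open>auto simp: ts_def ts'_def C_def sum_holes_update_two add_mset_commute\<close>)
  then show ?thesis unfolding D D' .
qed

lemma sv_step_delete_self_arrow: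
  assumes wf: "wf_gd D" and i: "i < length D"
    and ends: "Ep x True s \<in> set (D ! i)" "Ep x False s \<in> set (D ! i)"
  shows "sv_step D (D[i := filter (\<lambda>e. aname e \<noteq> x) (D ! i)])"
proof -
  define w where "w = filter (\<lambda>e. aname e \<noteq> x) (D ! i)"
  let ?F = "filter_mset (\<lambda>e. aname e = x)"
  define B where "B = mset (filter (\<lambda>e. aname e = x) (D ! i))"
  have "mset (D ! i) = mset w + B"
    unfolding B_def w_def by (metis mset_filter multiset_partition add.commute)
  then have whole: "mset (concat D) = mset (concat (D[i := w])) + B"
    using mset_concat_update[OF i, of w] by (simp add: ac_simps)
  have wf_ends: "wf_ends (mset (concat D))" using wf by (simp add: wf_gd_iff_wf_ends)
  have "x \<in> aname ` set_mset (mset (concat D))" using ends(1) i by force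
  then obtain s' where arrow: "?F (mset (concat D)) = {#Ep x True s', Ep x False s'#}"
    using wf_ends unfolding wf_ends_def by blast
  have "?F B = B" unfolding B_def by (simp add: filter_filter_mset)
  then have B_sub: "B \<subseteq># {#Ep x True s', Ep x False s'#}"
    unfolding arrow[symmetric] whole filter_union_mset by simp
  have ends_B: "Ep x True s \<in># B" "Ep x False s \<in># B" using ends by (auto simp: B_def)
  then have "Ep x True s \<in># {#Ep x True s', Ep x False s'#}" using B_sub by (meson mset_subset_eqD)
  then have "s' = s" by auto
  have "{#Ep x True s, Ep x False s#} \<subseteq># B"
    using ends_B by (auto simp: insert_subset_eq_iff in_diff_count)
  then have B: "B = {#Ep x True s, Ep x False s#}"
    using B_sub \<open>s' = s\<close> by (simp add: subset_mset.antisym)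
  then have "wf_ends (mset (concat (D[i := w])))"
    using wf_ends_remove_closed[of _ B] wf_ends whole by simp
  moreover have "length (filter (\<lambda>e. aname e = x) (D ! i)) = 2"
    using arg_cong[OF B, of size] by (simp add: B_def del: mset_filter)
  ultimately show ?thesis
    unfolding sv_step_def w_def using wf i by (simp add: wf_gd_iff_wf_ends) blast
qed

lemma Vn_sv_equiv_insert_self_arrow:
  assumes "wf_gd (D[j := w])" "j < length D"
    and "Ep z True s \<in> set w" "Ep z False s \<in> set w" "filter (\<lambda>e. aname e \<noteq> z) w = D ! j"
  shows "Vn_sv_equiv n D (D[j := w])"
proof -
  have "sv_step (D[j := w]) (D[j := w, j := filter (\<lambda>e. aname e \<noteq> z) w])"
    using sv_step_delete_self_arrow[of "D[j := w]" j z s] assms by simp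
  moreover have "D[j := w, j := filter (\<lambda>e. aname e \<noteq> z) w] = D" using assms(5) by simp
  ultimately show ?thesis using Vn_sv_equiv_sv Vn_sv_equiv_sym by metis
qed

lemma Vn_sv_equiv_delete_self_arrows:
  assumes "distinct xs" "wf_gd D" "i < length D"
    and "\<forall>x\<in>set xs. \<exists>s. Ep x True s \<in> set (D ! i) \<and> Ep x False s \<in> set (D ! i)"
  shows "Vn_sv_equiv n D (D[i := filter (\<lambda>e. aname e \<notin> set xs) (D ! i)])"
  using assms
proof (induction xs arbitrary: D)
  case Nil
  then show ?case by (simp add: Vn_sv_equiv_refl)
next
  case (Cons x xs)
  obtain s where "Ep x True s \<in> set (D ! i)" "Ep x False s \<in> set (D ! i)" using Cons.prems by auto
  then have sv: "sv_step D (D[i := filter (\<lambda>e. aname e \<noteq> x) (D ! i)])" (is "sv_step D ?D1")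
    using sv_step_delete_self_arrow Cons.prems(2,3) by blast
  then have "wf_gd ?D1" unfolding sv_step_def by blast
  moreover have "\<forall>y\<in>set xs. \<exists>s. Ep y True s \<in> set (?D1 ! i) \<and> Ep y False s \<in> set (?D1 ! i)"
    using Cons.prems by auto
  ultimately have "Vn_sv_equiv n ?D1 (?D1[i := filter (\<lambda>e. aname e \<notin> set xs) (?D1 ! i)])"
    using Cons.prems by (intro Cons.IH) auto
  also have "?D1[i := filter (\<lambda>e. aname e \<notin> set xs) (?D1 ! i)]
      = D[i := filter (\<lambda>e. aname e \<notin> set (x # xs)) (D ! i)]"
    using Cons.prems(3) by (simp add: conj_commute)
  finally show ?case using Vn_sv_equiv_sv[OF sv] Vn_sv_equiv_trans by blast
qed

lemma Vn_sv_equiv_insert_self_arrows: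
  assumes wf: "wf_gd (P @ [a @ X @ b @ Y @ c] @ R)"
    and closed: "\<forall>e\<in>set (X @ Y). other_end e \<in> set (X @ Y)"
  shows "Vn_sv_equiv n (P @ [a @ b @ c] @ R) (P @ [a @ X @ b @ Y @ c] @ R)"
proof -
  define D where "D = P @ [a @ X @ b @ Y @ c] @ R"
  define xs where "xs = remdups (map aname (X @ Y))"
  have i: "length P < length D" and Di: "D ! length P = a @ X @ b @ Y @ c"
    by (simp_all add: D_def)
  have ends: "\<exists>s. Ep x True s \<in> set (X @ Y) \<and> Ep x False s \<in> set (X @ Y)" if "x \<in> set xs" for x
  proof -
    obtain e where "e \<in> set (X @ Y)" "aname e = x" using \<open>x \<in> set xs\<close> by (auto simp: xs_def)
    then have "{e, other_end e} \<subseteq> set (X @ Y)" using closed by auto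
    then show ?thesis unfolding ends_other_end using \<open>aname e = x\<close> by auto
  qed
  have "wf_gd D" using wf by (simp add: D_def)
  moreover have
    "\<forall>x\<in>set xs. \<exists>s. Ep x True s \<in> set (D ! length P) \<and> Ep x False s \<in> set (D ! length P)"
    using ends unfolding Di by fastforce
  ultimately have "Vn_sv_equiv n D (D[length P := filter (\<lambda>e. aname e \<notin> set xs) (D ! length P)])"
    using i by (intro Vn_sv_equiv_delete_self_arrows) (simp_all add: xs_def)
  moreover have "filter (\<lambda>e. aname e \<notin> set xs) (a @ X @ b @ Y @ c) = a @ b @ c"
  proof -
    have wf_split: "wf_ends (mset (concat (P @ [a @ b @ c] @ R)) + mset (X @ Y))"
      using wf by (simp add: wf_gd_iff_wf_ends ac_simps)
    have "aname e \<notin> set xs" if "e \<in> set (a @ b @ c)" for e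
    proof
      assume "aname e \<in> set xs"
      then obtain s
        where "Ep (aname e) True s \<in># mset (X @ Y)" "Ep (aname e) False s \<in># mset (X @ Y)"
        using ends by auto
      moreover have "e \<in># mset (concat (P @ [a @ b @ c] @ R))" using that by auto
      ultimately show False
        using wf_ends_both_ends_in_part[OF wf_split] by blast
    qed
    then show ?thesis by (simp add: filter_id_conv filter_empty_conv xs_def)
  qed
  moreover have "D[length P := a @ b @ c] = P @ [a @ b @ c] @ R" by (simp add: D_def)
  ultimately show ?thesis using Di Vn_sv_equiv_sym unfolding D_def by metis
qed

section \<open>Exchanging adjacent ends of two strands\<close>

lemma split_list_two:
  assumes "x \<in> set l" "y \<in> set l" "x \<noteq> y"
  obtains u v w g1 g2 where "l = u @ [g1] @ v @ [g2] @ w"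
    and "(g1 = x \<and> g2 = y) \<or> (g1 = y \<and> g2 = x)"
proof -
  obtain l1 l2 where l: "l = l1 @ x # l2" using assms(1) by (meson split_list)
  then consider "y \<in> set l1" | "y \<in> set l2" using assms by auto
  then show thesis
  proof cases
    case 1
    then obtain m1 m2 where "l1 = m1 @ y # m2" by (meson split_list)
    then show thesis using l that[of m1 y m2 x l2] by auto
  next
    case 2
    then obtain m1 m2 where "l2 = m1 @ y # m2" by (meson split_list)
    then show thesis using l that[of l1 x m1 y m2] by auto
  qed
qed

text \<open>The instance of R3 with \<open>x := b\<close>, \<open>y := a\<close> and the auxiliary arrow as \<open>z\<close>; its sign
  condition forces \<open>z\<close> to have sign \<open>sa \<noteq> sb\<close>.\<close>

lemma local_move_R3_exchange:
  fixes a b z :: nat and sa sb :: bool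
  defines "tails \<equiv>
      if sb then [Ep b True sb, Ep z True (sa \<noteq> sb)] else [Ep z True (sa \<noteq> sb), Ep b True sb]"
    and "heads \<equiv>
      if sa then [Ep z False (sa \<noteq> sb), Ep a False sa] else [Ep a False sa, Ep z False (sa \<noteq> sb)]"
  assumes ij: "i < length D" "j < length D" "i \<noteq> j"
    and D: "D ! i = p @ [Ep a True sa, Ep b False sb] @ q" "D ! j = r @ S @ s @ S' @ t"
    and S: "(S = tails \<and> S' = heads) \<or> (S = heads \<and> S' = tails)"
    and wf: "wf_gd D"
      "wf_gd (D[i := p @ [Ep b False sb, Ep a True sa] @ q, j := r @ rev S @ s @ rev S' @ t])"
  shows "local_move R3 D
    (D[i := p @ [Ep b False sb, Ep a True sa] @ q, j := r @ rev S @ s @ rev S' @ t])"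
proof -
  define ss where "ss = [tails, [Ep a True sa, Ep b False sb], heads]"
  have R3: "R3 ss (map rev ss)"
    unfolding R3_def ss_def tails_def heads_def
    by (rule exI[of _ b], rule exI[of _ a], rule exI[of _ z], rule exI[of _ sb], rule exI[of _ sa],
        rule exI[of _ "sa \<noteq> sb"], rule exI[of _ True], rule exI[of _ "\<not> sb"], rule exI[of _ False],
        rule exI[of _ "\<not> sa"])
       (cases sa; cases sb; simp add: pm_def)
  have zip: "mset (zip ss (map rev ss))
      = {#([Ep a True sa, Ep b False sb], [Ep b False sb, Ep a True sa]), (S, rev S), (S', rev S')#}"
    using S by (auto simp: ss_def add_mset_commute)
  show ?thesis
    using local_move_two_strands[of R3 ss "map rev ss", OF R3 _ _ zip] ij D wf by (simp add: ss_def)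
qed

lemma Vn_sv_equiv_exchange:
  assumes wf: "wf_gd D" and ij: "i < length D" "j < length D" "i \<noteq> j"
    and Di: "D ! i = p @ [Ep a True sa, Ep b False sb] @ q"
    and ends_j: "Ep a False sa \<in> set (D ! j)" "Ep b True sb \<in> set (D ! j)"
  shows "Vn_sv_equiv n D (D[i := p @ [Ep b False sb, Ep a True sa] @ q])"
proof -
  obtain z where z: "z \<notin> names D" by (rule fresh_name)
  define tails heads where
    "tails =
      (if sb then [Ep b True sb, Ep z True (sa \<noteq> sb)] else [Ep z True (sa \<noteq> sb), Ep b True sb])"
    and "heads =
      (if sa then [Ep z False (sa \<noteq> sb), Ep a False sa] else [Ep a False sa, Ep z False (sa \<noteq> sb)])"
  obtain r s t g1 g2 where Dj: "D ! j = r @ [g1] @ s @ [g2] @ t"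
    and g: "(g1 = Ep a False sa \<and> g2 = Ep b True sb) \<or> (g1 = Ep b True sb \<and> g2 = Ep a False sa)"
    using split_list_two[OF ends_j] by (metis ep.inject)
  define seg where "seg g = (if g = Ep a False sa then heads else tails)" for g
  define wz w1 where "wz = r @ seg g1 @ s @ seg g2 @ t"
    and "w1 = r @ rev (seg g1) @ s @ rev (seg g2) @ t"
  define Dx where "Dx = D[i := p @ [Ep b False sb, Ep a True sa] @ q]"
  have "\<forall>e\<in>set (D ! j). aname e \<noteq> z"
    using z nth_mem[OF ij(2)] unfolding names_def by fastforce
  then have del_z: "filter (\<lambda>e. aname e \<noteq> z) wz = D ! j" "filter (\<lambda>e. aname e \<noteq> z) w1 = D ! j"
    using g unfolding wz_def w1_def Dj seg_def tails_def heads_def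
    by (auto simp: filter_id_conv)
  have ends_z: "Ep z True (sa \<noteq> sb) \<in> set wz" "Ep z False (sa \<noteq> sb) \<in> set wz"
    "Ep z True (sa \<noteq> sb) \<in> set w1" "Ep z False (sa \<noteq> sb) \<in> set w1"
    using g unfolding wz_def w1_def seg_def tails_def heads_def by auto
  have mset_wz: "mset wz = mset (D ! j) + {#Ep z True (sa \<noteq> sb), Ep z False (sa \<noteq> sb)#}"
    using g unfolding wz_def Dj seg_def tails_def heads_def by auto
  have mset_Dx: "mset (concat Dx) = mset (concat D)"
    unfolding Dx_def using ij Di by (intro mset_concat_update_perm) simp_all
  then have "names Dx = names D" unfolding names_def by (metis mset_eq_setD)
  then have wf_Dz: "wf_gd (D[j := wz])" and wf_D1: "wf_gd (Dx[j := w1])"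
    using wf_gd_insert_fresh_arrow[OF wf z ij(2)] mset_wz
      wf_gd_insert_fresh_arrow[OF wf_gd_mset_cong[OF mset_Dx wf], of z j w1] z ij
    by (simp_all add: Dx_def w1_def wz_def)
  have "Vn_sv_equiv n D (D[j := wz])"
    using Vn_sv_equiv_insert_self_arrow[OF wf_Dz ij(2)] ends_z del_z by simp
  also have "Vn_sv_equiv n (D[j := wz]) (Dx[j := w1])"
  proof (rule Vn_sv_equiv_R3)
    have "Dx[j := w1] = D[j := wz, i := p @ [Ep b False sb, Ep a True sa] @ q,
        j := r @ rev (seg g1) @ s @ rev (seg g2) @ t]"
      using ij(3) unfolding Dx_def w1_def by (metis list_update_overwrite list_update_swap)
    moreover have "(seg g1 = tails \<and> seg g2 = heads) \<or> (seg g1 = heads \<and> seg g2 = tails)"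
      using g by (auto simp: seg_def)
    ultimately show "local_move R3 (D[j := wz]) (Dx[j := w1])"
      using local_move_R3_exchange[where a = a and b = b and z = z and sa = sa and sb = sb and i = i
          and D = "D[j := wz]" and j = j and p = p and q = q and r = r and S = "seg g1" and s = s
          and S' = "seg g2" and t = t]
        ij Di wf_Dz wf_D1
      unfolding tails_def heads_def by (simp add: wz_def)
  qed
  also have "Vn_sv_equiv n (Dx[j := w1]) Dx"
  proof (rule Vn_sv_equiv_sym)
    show "Vn_sv_equiv n Dx (Dx[j := w1])"
      using Vn_sv_equiv_insert_self_arrow[OF wf_D1] ends_z del_z ij by (simp add: Dx_def)
  qed
  finally show ?thesis unfolding Dx_def .
qed

definition exchangeable :: "ep set \<Rightarrow> ep \<Rightarrow> ep \<Rightarrow> bool" where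
  "exchangeable S x y \<longleftrightarrow> is_tail x \<noteq> is_tail y \<and> other_end x \<in> S \<and> other_end y \<in> S"

definition adjacent_swap :: "ep set \<Rightarrow> ep list \<Rightarrow> ep list \<Rightarrow> bool" where
  "adjacent_swap S w w' \<longleftrightarrow>
     (\<exists>p q x y. w = p @ [x, y] @ q \<and> w' = p @ [y, x] @ q \<and> exchangeable S x y)"

lemma exchangeable_sym: "exchangeable S x y \<Longrightarrow> exchangeable S y x"
  by (auto simp: exchangeable_def)

lemma Vn_sv_equiv_exchange_tail_first:
  assumes "wf_gd D" "i < length D" "j < length D" "i \<noteq> j"
    and "D ! i = p @ [x, y] @ q" "is_tail x" "exchangeable (set (D ! j)) x y"
  shows "Vn_sv_equiv n D (D[i := p @ [y, x] @ q])"
proof -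
  have "x = Ep (aname x) True (pos x)" "y = Ep (aname y) False (pos y)"
    using assms(6,7) unfolding exchangeable_def by (metis ep.collapse)+
  moreover have "Ep (aname x) False (pos x) \<in> set (D ! j)" "Ep (aname y) True (pos y) \<in> set (D ! j)"
    using assms(6,7) unfolding exchangeable_def other_end_def by auto
  ultimately show ?thesis
    using Vn_sv_equiv_exchange[OF assms(1-4), of p "aname x" "pos x" "aname y" "pos y" q] assms(5)
    by simp
qed

lemma Vn_sv_equiv_adjacent_swap:
  assumes wf: "wf_gd D" and ij: "i < length D" "j < length D" "i \<noteq> j"
    and "adjacent_swap (set (D ! j)) (D ! i) w"
  shows "Vn_sv_equiv n D (D[i := w])"
proof -
  obtain p q x y where Di: "D ! i = p @ [x, y] @ q" and w: "w = p @ [y, x] @ q"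
    and ex: "exchangeable (set (D ! j)) x y"
    using assms(5) unfolding adjacent_swap_def by blast
  show ?thesis
  proof (cases "is_tail x")
    case True
    then show ?thesis using Vn_sv_equiv_exchange_tail_first[OF wf ij Di _ ex] w by simp
  next
    case False
    then have "is_tail y" using ex by (simp add: exchangeable_def)
    have "wf_gd (D[i := w])"
      using wf_gd_mset_cong[OF mset_concat_update_perm wf] ij Di w by simp
    then have "Vn_sv_equiv n (D[i := w]) (D[i := w, i := p @ [x, y] @ q])"
      using Vn_sv_equiv_exchange_tail_first[of "D[i := w]" i j p y x q] ij w \<open>is_tail y\<close>
        exchangeable_sym[OF ex]
      by simp
    moreover have "D[i := w, i := p @ [x, y] @ q] = D"
      using Di by (metis list_update_id list_update_overwrite)
    ultimately show ?thesis using Vn_sv_equiv_sym by metis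
  qed
qed

lemma Vn_sv_equiv_adjacent_swaps:
  assumes "(adjacent_swap (set (D ! j)))\<^sup>*\<^sup>* (D ! i) w"
    and wf: "wf_gd D" and ij: "i < length D" "j < length D" "i \<noteq> j"
  shows "Vn_sv_equiv n D (D[i := w])"
  using assms(1)
proof (induction rule: rtranclp_induct)
  case base
  then show ?case by (simp add: Vn_sv_equiv_refl)
next
  case (step w1 w2)
  have "mset w1 = mset (D ! i)"
    using step.hyps(1)
    by (induction rule: rtranclp_induct) (auto simp: adjacent_swap_def add_mset_commute)
  then have "wf_gd (D[i := w1])" using wf_gd_mset_cong[OF mset_concat_update_perm wf] ij by simp
  then have "Vn_sv_equiv n (D[i := w1]) (D[i := w1, i := w2])"
    using Vn_sv_equiv_adjacent_swap[of "D[i := w1]" i j w2] step.hyps(2) ij by simp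
  then show ?case using Vn_sv_equiv_trans[OF step.IH] by simp
qed

lemma adjacent_swaps_append:
  "(adjacent_swap S)\<^sup>*\<^sup>* w w' \<Longrightarrow> (adjacent_swap S)\<^sup>*\<^sup>* (l @ w @ r) (l @ w' @ r)"
proof (induction rule: rtranclp_induct)
  case (step w1 w2)
  then obtain p q x y where "w1 = p @ [x, y] @ q" "w2 = p @ [y, x] @ q" "exchangeable S x y"
    unfolding adjacent_swap_def by blast
  then have "adjacent_swap S (l @ w1 @ r) (l @ w2 @ r)"
    unfolding adjacent_swap_def by (intro exI[of _ "l @ p"] exI[of _ "q @ r"]) auto
  with step.IH show ?case by (rule rtranclp.rtrancl_into_rtrancl)
qed (rule rtranclp.rtrancl_refl)

lemma adjacent_swaps_head_past_tails:
  assumes "\<not> is_tail x" "other_end x \<in> S" "\<forall>t\<in>set T. is_tail t \<and> other_end t \<in> S"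
  shows "(adjacent_swap S)\<^sup>*\<^sup>* (x # T @ H) (T @ x # H)"
  using assms(3)
proof (induction T)
  case (Cons t T)
  have "adjacent_swap S (x # t # T @ H) (t # x # T @ H)"
    unfolding adjacent_swap_def exchangeable_def using assms(1,2) Cons.prems
    by (intro exI[of _ "[]"] exI[of _ "T @ H"]) auto
  moreover have "(adjacent_swap S)\<^sup>*\<^sup>* ([t] @ (x # T @ H) @ []) ([t] @ (T @ x # H) @ [])"
    using Cons by (intro adjacent_swaps_append) simp
  ultimately show ?case by (simp add: converse_rtranclp_into_rtranclp)
qed simp

lemma adjacent_swaps_tails_first:
  "\<forall>e\<in>set l. other_end e \<in> S \<Longrightarrow>
   (adjacent_swap S)\<^sup>*\<^sup>* l (filter is_tail l @ filter (\<lambda>e. \<not> is_tail e) l)"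
proof (induction l)
  case (Cons x l)
  then have sorted_l: "(adjacent_swap S)\<^sup>*\<^sup>* ([x] @ l @ [])
      ([x] @ (filter is_tail l @ filter (\<lambda>e. \<not> is_tail e) l) @ [])"
    by (intro adjacent_swaps_append) simp
  show ?case
  proof (cases "is_tail x")
    case True
    then show ?thesis using sorted_l by simp
  next
    case False
    then have "(adjacent_swap S)\<^sup>*\<^sup>* (x # filter is_tail l @ filter (\<lambda>e. \<not> is_tail e) l)
        (filter is_tail l @ x # filter (\<lambda>e. \<not> is_tail e) l)"
      using Cons.prems by (intro adjacent_swaps_head_past_tails) auto
    then show ?thesis using sorted_l False by (simp add: rtranclp_trans)
  qed
qed simp

lemma Vn_sv_equiv_sort_tails_first:
  assumes "wf_gd D" "i < length D" "j < length D" "i \<noteq> j"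
    and "D ! i = p @ X @ q" "\<forall>e\<in>set X. other_end e \<in> set (D ! j)"
  shows "Vn_sv_equiv n D (D[i := p @ filter is_tail X @ filter (\<lambda>e. \<not> is_tail e) X @ q])"
proof (rule Vn_sv_equiv_adjacent_swaps[OF _ assms(1-4)])
  show "(adjacent_swap (set (D ! j)))\<^sup>*\<^sup>* (D ! i)
      (p @ filter is_tail X @ filter (\<lambda>e. \<not> is_tail e) X @ q)"
    unfolding assms(5)
    using adjacent_swaps_append[OF adjacent_swaps_tails_first[OF assms(6)], of p q]
    by simp
qed

section \<open>Twists as pairs of opposite clasps\<close>

text \<open>The two arcs of a 2n-move, or of two V^n-moves in opposite directions: n arrows of sign
  \<open>s\<close> run from \<open>X\<close> to \<open>Y\<close> and n from \<open>Y\<close> to \<open>X\<close>.\<close>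

definition mutual_clasp :: "nat \<Rightarrow> bool \<Rightarrow> ep list \<Rightarrow> ep list \<Rightarrow> bool" where
  "mutual_clasp n s X Y \<longleftrightarrow> (\<forall>e \<in> set X \<union> set Y. pos e = s) \<and>
     length (filter (\<lambda>e. \<not> is_tail e) X) = n \<and> length (filter (\<lambda>e. \<not> is_tail e) Y) = n \<and>
     mset (filter is_tail X) = mset (map other_end (filter (\<lambda>e. \<not> is_tail e) Y)) \<and>
     mset (filter is_tail Y) = mset (map other_end (filter (\<lambda>e. \<not> is_tail e) X))"

lemma mutual_clasp_sym: "mutual_clasp n s X Y \<Longrightarrow> mutual_clasp n s Y X"
  unfolding mutual_clasp_def by auto

lemma mutual_clasp_rev: "mutual_clasp n s X Y \<Longrightarrow> mutual_clasp n s (rev X) Y"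
  unfolding mutual_clasp_def by (simp add: rev_filter[symmetric] rev_map[symmetric])

lemma mutual_clasp_other_end:
  assumes "mutual_clasp n s X Y" "e \<in> set X"
  shows "other_end e \<in> set Y"
proof (cases "is_tail e")
  case True
  then have "e \<in># mset (filter is_tail X)" using assms(2) by simp
  then have "e \<in> other_end ` set (filter (\<lambda>e. \<not> is_tail e) Y)"
    using assms(1) unfolding mutual_clasp_def by (metis set_mset_mset set_map)
  then show ?thesis by auto
next
  case False
  then have "other_end e \<in># mset (filter is_tail Y)"
    using assms unfolding mutual_clasp_def by simp
  then show ?thesis by simp
qed

lemma V_move_mutual_clasp:
  assumes "mutual_clasp n s X Y"
  shows "V_move n [[], []] [filter (\<lambda>e. \<not> is_tail e) Y, filter is_tail X]"
proof -
  let ?H = "filter (\<lambda>e. \<not> is_tail e) Y"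
  define xs where "xs = map aname ?H"
  have heads: "\<forall>e \<in> set ?H. \<not> is_tail e \<and> pos e = s"
    using assms unfolding mutual_clasp_def by auto
  then have "map (\<lambda>x. Ep x False s) xs = ?H"
    unfolding xs_def map_map by (intro map_idI) (auto intro: ep.expand)
  moreover have "map (\<lambda>x. Ep x True s) xs = map other_end ?H"
    unfolding xs_def using heads by (simp add: other_end_def)
  moreover have "length xs = n" using assms unfolding xs_def mutual_clasp_def by simp
  ultimately show ?thesis
    using assms unfolding V_move_def mutual_clasp_def
    by (intro exI[of _ xs] exI[of _ s] exI[of _ "filter is_tail X"]) simp
qed

lemma Vn_sv_equiv_sort_mutual_clasp:
  assumes clasp: "mutual_clasp n s X Y"
    and wf: "wf_gd (P @ [a1 @ X @ a2] @ M @ [b1 @ Y @ b2] @ R)"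
  shows "Vn_sv_equiv n (P @ [a1 @ X @ a2] @ M @ [b1 @ Y @ b2] @ R)
    (P @ [a1 @ filter is_tail X @ filter (\<lambda>e. \<not> is_tail e) X @ a2] @ M
       @ [b1 @ filter is_tail Y @ filter (\<lambda>e. \<not> is_tail e) Y @ b2] @ R)"
proof -
  define X' Y' where "X' = filter is_tail X @ filter (\<lambda>e. \<not> is_tail e) X"
    and "Y' = filter is_tail Y @ filter (\<lambda>e. \<not> is_tail e) Y"
  define D D' D'' where "D = P @ [a1 @ X @ a2] @ M @ [b1 @ Y @ b2] @ R"
    and "D' = P @ [a1 @ X' @ a2] @ M @ [b1 @ Y @ b2] @ R"
    and "D'' = P @ [a1 @ X' @ a2] @ M @ [b1 @ Y' @ b2] @ R"
  define i j where "i = length P" and "j = Suc (length P + length M)"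
  have ij: "i < length D" "j < length D" "i \<noteq> j" and ij': "i < length D'" "j < length D'"
    by (simp_all add: i_def j_def D_def D'_def)
  have D_i: "D ! i = a1 @ X @ a2" and D_j: "D ! j = b1 @ Y @ b2"
    and D'_i: "D' ! i = a1 @ X' @ a2" and D'_j: "D' ! j = b1 @ Y @ b2"
    by (simp_all add: D_def D'_def i_def j_def nth_append)
  have "D[i := a1 @ X' @ a2] = D'" by (simp add: D_def D'_def i_def)
  moreover have "\<forall>e\<in>set X. other_end e \<in> set (D ! j)"
    using mutual_clasp_other_end[OF clasp] D_j by simp
  ultimately have "Vn_sv_equiv n D D'"
    using Vn_sv_equiv_sort_tails_first[OF wf[folded D_def] ij D_i] by (simp add: X'_def)
  also have "Vn_sv_equiv n D' D''"
  proof -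
    have "D'[j := b1 @ Y' @ b2] = D''" by (simp add: D'_def D''_def j_def list_update_append)
    moreover have "wf_gd D'"
      using wf_gd_mset_cong[of D' D] wf by (simp add: D_def D'_def X'_def)
    moreover have "\<forall>e\<in>set Y. other_end e \<in> set (D' ! i)"
      using mutual_clasp_other_end[OF mutual_clasp_sym[OF clasp]] D'_i by (auto simp: X'_def)
    ultimately show ?thesis
      using Vn_sv_equiv_sort_tails_first[of D' j i b1 Y b2 n] ij' ij(3) D'_j by (simp add: Y'_def)
  qed
  finally show ?thesis by (simp add: D_def D''_def X'_def Y'_def)
qed

lemma Vn_sv_equiv_insert_mutual_clasp:
  assumes clasp: "mutual_clasp n s X Y"
    and wf0: "wf_gd (P @ [a1 @ a2] @ M @ [b1 @ b2] @ R)"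
    and wf1: "wf_gd (P @ [a1 @ X @ a2] @ M @ [b1 @ Y @ b2] @ R)"
  shows "Vn_sv_equiv n (P @ [a1 @ a2] @ M @ [b1 @ b2] @ R)
    (P @ [a1 @ X @ a2] @ M @ [b1 @ Y @ b2] @ R)"
proof -
  define tX hX tY hY where "tX = filter is_tail X" and "hX = filter (\<lambda>e. \<not> is_tail e) X"
    and "tY = filter is_tail Y" and "hY = filter (\<lambda>e. \<not> is_tail e) Y"
  define D2 D3 where "D2 = P @ [a1 @ tX @ hX @ a2] @ M @ [b1 @ tY @ hY @ b2] @ R"
    and "D3 = P @ [a1 @ hX @ a2] @ M @ [b1 @ tY @ b2] @ R"
  have sorted: "Vn_sv_equiv n (P @ [a1 @ X @ a2] @ M @ [b1 @ Y @ b2] @ R) D2"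
    unfolding D2_def tX_def hX_def tY_def hY_def
    by (rule Vn_sv_equiv_sort_mutual_clasp[OF clasp wf1])
  have "mset (concat D2) = mset (concat (P @ [a1 @ X @ a2] @ M @ [b1 @ Y @ b2] @ R))"
    by (simp add: D2_def tX_def hX_def tY_def hY_def)
  then have wf2: "wf_gd D2" using wf_gd_mset_cong wf1 by blast
  have "mset (concat D2) = mset (concat D3) + (mset tX + mset hY)"
    by (simp add: D2_def D3_def ac_simps)
  moreover have "\<forall>e \<in># mset tX + mset hY. other_end e \<in># mset tX + mset hY"
    using mutual_clasp_other_end[OF clasp] mutual_clasp_other_end[OF mutual_clasp_sym[OF clasp]]
    by (auto simp: tX_def hY_def)
  ultimately have wf3: "wf_gd D3"
    using wf_ends_remove_closed wf2 unfolding wf_gd_iff_wf_ends by metis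
  have "Vn_sv_equiv n (P @ [a1 @ a2] @ M @ [b1 @ b2] @ R) D3"
    using local_move_insert_two_strands[of "V_move n" hX tY P a1 a2 M b1 b2 R]
      V_move_mutual_clasp[OF mutual_clasp_sym[OF clasp]] wf0 wf3
    by (simp add: D3_def hX_def tY_def Vn_sv_equiv_V_move)
  also have "Vn_sv_equiv n D3 D2"
    using local_move_insert_two_strands[of "V_move n" tX hY P a1 "hX @ a2" M "b1 @ tY" b2 R]
      V_move_mutual_clasp[OF clasp] wf2 wf3
    by (simp add: D2_def D3_def tX_def hY_def Vn_sv_equiv_V_move)
  also have "Vn_sv_equiv n D2 (P @ [a1 @ X @ a2] @ M @ [b1 @ Y @ b2] @ R)"
    using sorted by (rule Vn_sv_equiv_sym)
  finally show ?thesis .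
qed

lemma length_filter_parity_upt:
  assumes "P True \<noteq> P False"
  shows "length (filter (\<lambda>i. P (even i)) [0..<2 * n]) = n"
proof (induction n)
  case (Suc n)
  have "[0..<2 * Suc n] = [0..<2 * n] @ [2 * n, Suc (2 * n)]" by simp
  then show ?case using Suc assms by (cases "P True") auto
qed simp

lemma mutual_clasp_twist:
  "mutual_clasp n s (map (\<lambda>i. Ep (xs ! i) (c = even i) s) [0..<2 * n])
     (map (\<lambda>i. Ep (xs ! i) (c \<noteq> even i) s) [0..<2 * n])"
  using length_filter_parity_upt[of "\<lambda>b. c = b" n] length_filter_parity_upt[of "\<lambda>b. c \<noteq> b" n]
  unfolding mutual_clasp_def by (auto simp: filter_map comp_def)

lemma twist_move_mutual_clasp:
  assumes "twist_move n ss ss'"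
  shows "ss = [[], []] \<and> (\<exists>s X Y. ss' = [X, Y] \<and> mutual_clasp n s X Y)"
proof -
  obtain xs c s rv where ss: "ss = [[], []]" and ss': "ss' =
      [map (\<lambda>i. Ep (xs ! i) (c = even i) s) [0..<2 * n],
       (if rv then rev else id) (map (\<lambda>i. Ep (xs ! i) (c \<noteq> even i) s) [0..<2 * n])]"
    using assms unfolding twist_move_def by blast
  have "mutual_clasp n s (map (\<lambda>i. Ep (xs ! i) (c = even i) s) [0..<2 * n])
      ((if rv then rev else id) (map (\<lambda>i. Ep (xs ! i) (c \<noteq> even i) s) [0..<2 * n]))"
    using mutual_clasp_twist mutual_clasp_rev mutual_clasp_sym by auto
  then show ?thesis using ss ss' by blast
qed

lemma Vn_sv_equiv_twist_move:
  assumes "local_move (twist_move n) D D'"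
  shows "Vn_sv_equiv n D D'"
proof -
  obtain C ss ss' ts ts' where tw: "twist_move n ss ss'" and len: "length ss = length ss'"
    "length ts = length ss" "length ts' = length ss"
    and zip: "mset (zip ts ts') = mset (zip ss ss')" and holes: "sum_list (map holes C) = length ts"
    and D: "D = fill C ts" and D': "D' = fill C ts'" and wf: "wf_gd D" "wf_gd D'"
    using assms unfolding local_move_def by blast
  obtain s X Y where ss: "ss = [[], []]" and ss': "ss' = [X, Y]" and clasp: "mutual_clasp n s X Y"
    using twist_move_mutual_clasp[OF tw] by blast
  have "length ts = Suc (Suc 0)" "length ts' = Suc (Suc 0)" using len ss by simp_all
  then obtain t1 t2 t1' t2' where ts: "ts = [t1, t2]" and ts': "ts' = [t1', t2']"
    by (auto simp: length_Suc_conv)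
  have "{#(t1, t1'), (t2, t2')#} = {#([], X), ([], Y)#}"
    using zip unfolding ts ts' ss ss' by simp
  then have "t1 = []" "t2 = []" and clasp': "mutual_clasp n s t1' t2'"
    using clasp mutual_clasp_sym by (auto simp: add_eq_conv_ex)
  have "sum_list (map holes C) = 2" using holes ts by simp
  then show ?thesis
  proof (cases rule: context_two_holes_cases)
    case (same_strand P a b c R)
    have "\<forall>e\<in>set (t1' @ t2'). other_end e \<in> set (t1' @ t2')"
      using mutual_clasp_other_end[OF clasp'] mutual_clasp_other_end[OF mutual_clasp_sym[OF clasp']]
      by auto
    then show ?thesis
      using Vn_sv_equiv_insert_self_arrows wf(2) same_strand \<open>t1 = []\<close> \<open>t2 = []\<close>
      unfolding D D' ts ts' by simp
  next
    case (two_strands P a1 a2 M b1 b2 R)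
    then show ?thesis
      using Vn_sv_equiv_insert_mutual_clasp[OF clasp'] wf \<open>t1 = []\<close> \<open>t2 = []\<close>
      unfolding D D' ts ts' by simp
  qed
qed

theorem proposition5p1:
  fixes n :: nat and D1 D2 :: gdiag
  assumes "0 < n" and "wf_gd D1" and "wf_gd D2"
    and "twon_sv_equiv n D1 D2"
  shows "Vn_sv_equiv n D1 D2"
proof -
  have "Vn_sv_equiv n D D'"
    if "isotopy_step D D' \<or> local_move (twist_move n) D D' \<or> sv_step D D'" for D D'
    using that Vn_sv_equiv_isotopy Vn_sv_equiv_twist_move Vn_sv_equiv_sv by blast
  then show ?thesis
    using assms(4) unfolding twon_sv_equiv_def Vn_sv_equiv_def by (rule equivclp_le_equivclp)
qed

end
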